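(* Let $S$ be a compact metrizable space, let $\boldsymbol{X} = (X_0, X_1,\dots)$ be a sequence of $S$-valued random variables on a probability space $(\Omega,\mathscr F,\mathbb P)$, and let $\boldsymbol{\xi} = (\xi_0, \xi_1,\dots)$ be a product disintegration of $\boldsymbol{X}$. Let $f\colon S\to\mathbb{R}$ be continuous. Then \[ \mathbb{P}\left(\lim_{n\to\infty} \frac1n\sum_{i=0}^{n-1}\big(f( X_i) - \xi_i(f)\big) = 0\right)= 1. \] In particular, the limit $X_\infty(f)\coloneqq \lim_{n\to\infty} n^{-1}\sum_{i=0}^{n-1}f( X_i)$ exists almost surely if and only if the limit $\xi_\infty(f)\coloneqq \lim_{n\to\infty}n^{-1}\sum_{i=0}^{n-1}\xi_i(f)$ exists almost surely, in which case $X_\infty(f) = \xi_\infty(f)$ almost surely.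
   Context: $M_1(S)$ denotes the set of Borel probability measures on $S$, equipped with the weak topology and its Borel $\sigma$-field; a random probability measure on $S$ is a measurable map $\xi\colon\Omega\to M_1(S)$. For $\mu\in M_1(S)$ and $f\in C(S)$, $\mu(f)\coloneqq\int_S f\,d\mu$. A sequence $\boldsymbol\xi=(\xi_0,\xi_1,\dots)$ of random probability measures on $S$ is a product disintegration of $\boldsymbol X$ if, with probability one, $\mathbb{P}[X_0\in A_0,\dots,X_n\in A_n\mid \boldsymbol{\xi}] = \xi_0(A_0)\cdots\xi_n(A_n)$ holds simultaneously for every $n\ge 0$ and every family $A_0,\dots,A_n$ of Borel subsets of $S$ (conditioning is on $\sigma(\boldsymbol\xi)$). *)

theory Defs
  imports "HOL-Probability.Probability"
begin

text \<open>The sigma-field generated by the sequence of random probability measures xi,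
  where the space of probability measures carries the Giry (evaluation) sigma-algebra
  prob_algebra borel, which for compact metrizable S is the Borel sigma-field of the weak topology.\<close>
definition sigma_of_seq :: "'b measure \<Rightarrow> (nat \<Rightarrow> 'b \<Rightarrow> 'a::topological_space measure) \<Rightarrow> 'b measure" where
  "sigma_of_seq M \<xi> =
     vimage_algebra (space M) (\<lambda>\<omega> i. \<xi> i \<omega>) (PiM UNIV (\<lambda>_. prob_algebra (borel :: 'a measure)))"

definition product_disintegration ::
  "'b measure \<Rightarrow> (nat \<Rightarrow> 'b \<Rightarrow> 'a::topological_space) \<Rightarrow> (nat \<Rightarrow> 'b \<Rightarrow> 'a measure) \<Rightarrow> bool" where
  "product_disintegration M X \<xi> \<longleftrightarrow>
     (\<forall>i. \<xi> i \<in> M \<rightarrow>\<^sub>M prob_algebra borel) \<and>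
     (\<forall>n (A :: nat \<Rightarrow> 'a set). (\<forall>i\<le>n. A i \<in> sets borel) \<longrightarrow>
        (AE \<omega> in M. real_cond_exp M (sigma_of_seq M \<xi>)
              (indicator {\<omega>'\<in>space M. \<forall>i\<le>n. X i \<omega>' \<in> A i}) \<omega>
            = (\<Prod>i\<le>n. measure (\<xi> i \<omega>) (A i))))"

end

theory Submission
  imports Defs "HOL-Library.Discrete_Functions"
begin

(* Put Y_i = f(X_i) - xi_i(f). Given sigma(xi), the X_i are independent with laws xi_i, so
   E[W g(X_a) h(X_b)] = E[W xi_a(g) xi_b(h)] for every bounded sigma(xi)-measurable W and a < b;
   this makes the Y_i pairwise orthogonal in L^2, and they are bounded because f is continuous on
   a compact space. Bounded orthogonal sequences obey Rajchman's strong law: E[S_n^2] <= n C^2, so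
   the sum over k of E[(S_(k^2) / k^2)^2] is finite and S_(k^2) / k^2 -> 0 almost surely, while
   boundedness controls S_n / n between consecutive squares. The claims about the two limits then
   follow because the two averages differ by a null sequence. *)

section \<open>Rajchman's strong law for bounded orthogonal sequences\<close>

lemma abs_mult_le_mult: "\<bar>x\<bar> \<le> a \<Longrightarrow> \<bar>y\<bar> \<le> b \<Longrightarrow> \<bar>x * y\<bar> \<le> a * b" for x y a b :: real
  unfolding abs_mult by (rule mult_mono) (auto intro: order_trans[OF abs_ge_zero])

lemma averages_tendsto_zero_of_squares:
  fixes y :: "nat \<Rightarrow> real"
  assumes bound: "\<And>i. \<bar>y i\<bar> \<le> C"
    and squares: "(\<lambda>k. (\<Sum>i<k\<^sup>2. y i) / real (k\<^sup>2)) \<longlonglongrightarrow> 0"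
  shows "(\<lambda>n. (\<Sum>i<n. y i) / real n) \<longlonglongrightarrow> 0"
proof (rule Lim_null_comparison)
  define j where "j n = floor_sqrt n" for n
  have j_top: "filterlim j at_top sequentially"
    unfolding filterlim_at_top eventually_sequentially j_def
    by (metis le_floor_sqrtI)
  have "(\<lambda>n. (\<Sum>i<(j n)\<^sup>2. y i) / real ((j n)\<^sup>2)) \<longlonglongrightarrow> 0"
    using filterlim_compose[OF squares j_top] by simp
  moreover have "(\<lambda>n. 2 * C / real (j n)) \<longlonglongrightarrow> 0"
    by (intro tendsto_divide_0[OF tendsto_const] filterlim_compose[OF filterlim_real_sequentially j_top]
        filterlim_at_top_imp_at_infinity)
  ultimately show "(\<lambda>n. \<bar>(\<Sum>i<(j n)\<^sup>2. y i) / real ((j n)\<^sup>2)\<bar> + 2 * C / real (j n)) \<longlonglongrightarrow> 0"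
    by (intro tendsto_add_zero tendsto_rabs_zero)
  show "\<forall>\<^sub>F n in sequentially. norm ((\<Sum>i<n. y i) / real n)
      \<le> \<bar>(\<Sum>i<(j n)\<^sup>2. y i) / real ((j n)\<^sup>2)\<bar> + 2 * C / real (j n)"
  proof (rule eventually_sequentiallyI[of 1])
    fix n :: nat assume "1 \<le> n"
    then have j_pos: "j n > 0" and sq_le: "(j n)\<^sup>2 \<le> n" and lt_sq: "n < (Suc (j n))\<^sup>2"
      unfolding j_def using Suc_floor_sqrt_power2_gt by auto
    have C: "C \<ge> 0" using bound[of 0] by linarith
    have split: "(\<Sum>i<n. y i) = (\<Sum>i<(j n)\<^sup>2. y i) + (\<Sum>i\<in>{(j n)\<^sup>2..<n}. y i)"
      using sum.atLeastLessThan_concat[of 0 "(j n)\<^sup>2" n y] sq_le by (simp add: atLeast0LessThan)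
    have "\<bar>\<Sum>i\<in>{(j n)\<^sup>2..<n}. y i\<bar> \<le> real (card {(j n)\<^sup>2..<n}) * C"
      using sum_abs[of y] sum_bounded_above[of _ "\<lambda>i. \<bar>y i\<bar>", OF bound] by (meson order_trans)
    also have "\<dots> \<le> real (2 * j n) * C"
      using lt_sq C by (intro mult_right_mono) (auto simp: power2_eq_square)
    finally have tail: "\<bar>\<Sum>i\<in>{(j n)\<^sup>2..<n}. y i\<bar> \<le> 2 * real (j n) * C" by simp
    have "\<bar>(\<Sum>i<n. y i) / real n\<bar>
        \<le> \<bar>\<Sum>i<(j n)\<^sup>2. y i\<bar> / real ((j n)\<^sup>2) + 2 * real (j n) * C / real ((j n)\<^sup>2)"
      unfolding split using j_pos sq_le tail C \<open>1 \<le> n\<close>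
      by (auto simp: add_divide_distrib abs_triangle_ineq divide_right_mono
          intro!: order_trans[OF abs_triangle_ineq] add_mono divide_left_mono frac_le)
    also have "2 * real (j n) * C / real ((j n)\<^sup>2) = 2 * C / real (j n)"
      using j_pos by (simp add: power2_eq_square)
    finally show "norm ((\<Sum>i<n. y i) / real n)
        \<le> \<bar>(\<Sum>i<(j n)\<^sup>2. y i) / real ((j n)\<^sup>2)\<bar> + 2 * C / real (j n)"
      by simp
  qed
qed

lemma AE_tendsto_zero_of_summable_integrals:
  fixes Z :: "nat \<Rightarrow> 'a \<Rightarrow> real"
  assumes [measurable]: "\<And>k. Z k \<in> borel_measurable M"
    and nonneg: "\<And>k x. 0 \<le> Z k x"
    and integrable: "\<And>k. integrable M (Z k)"
    and summable: "summable (\<lambda>k. \<integral>x. Z k x \<partial>M)"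
  shows "AE x in M. (\<lambda>k. Z k x) \<longlonglongrightarrow> 0"
proof -
  have "(\<integral>\<^sup>+x. (\<Sum>k. ennreal (Z k x)) \<partial>M) = (\<Sum>k. \<integral>\<^sup>+x. ennreal (Z k x) \<partial>M)"
    by (rule nn_integral_suminf) measurable
  also have "\<dots> = (\<Sum>k. ennreal (\<integral>x. Z k x \<partial>M))"
    using integrable nonneg by (simp add: nn_integral_eq_integral)
  also have "\<dots> = ennreal (\<Sum>k. \<integral>x. Z k x \<partial>M)"
    using summable nonneg by (simp add: suminf_ennreal2)
  finally have "AE x in M. (\<Sum>k. ennreal (Z k x)) \<noteq> \<infinity>"
    by (intro nn_integral_noteq_infinite) auto
  then show ?thesis
    by eventually_elim (use nonneg summable_suminf_not_top in \<open>auto intro: summable_LIMSEQ_zero\<close>)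
qed

lemma (in prob_space) integral_square_sum_orthogonal_le:
  fixes Y :: "nat \<Rightarrow> 'a \<Rightarrow> real"
  assumes [measurable]: "\<And>i. Y i \<in> borel_measurable M"
    and bound: "\<And>i x. x \<in> space M \<Longrightarrow> \<bar>Y i x\<bar> \<le> C"
    and orthogonal: "\<And>i j. i \<noteq> j \<Longrightarrow> (\<integral>x. Y i x * Y j x \<partial>M) = 0"
  shows "(\<integral>x. (\<Sum>i<n. Y i x)\<^sup>2 \<partial>M) \<le> real n * C\<^sup>2"
proof -
  have product_bound: "\<bar>Y i x * Y j x\<bar> \<le> C\<^sup>2" if "x \<in> space M" for i j x
    using abs_mult_le_mult[OF bound[OF that] bound[OF that]] by (simp add: power2_eq_square)
  then have integrable_product: "integrable M (\<lambda>x. Y i x * Y j x)" for i j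
    by (intro integrable_const_bound[where B="C\<^sup>2"] AE_I2) auto
  have "(\<integral>x. (\<Sum>i<n. Y i x)\<^sup>2 \<partial>M) = (\<Sum>i<n. \<Sum>j<n. \<integral>x. Y i x * Y j x \<partial>M)"
    by (simp add: power2_eq_square sum_product integrable_product)
  also have "\<dots> = (\<Sum>i<n. \<integral>x. Y i x * Y i x \<partial>M)"
  proof (rule sum.cong[OF refl])
    fix i assume "i \<in> {..<n}"
    then show "(\<Sum>j<n. \<integral>x. Y i x * Y j x \<partial>M) = (\<integral>x. Y i x * Y i x \<partial>M)"
      using orthogonal by (simp add: sum.remove[of "{..<n}" i])
  qed
  also have "\<dots> \<le> (\<Sum>i<n. C\<^sup>2)"
  proof (rule sum_mono)
    fix i
    have "(\<integral>x. Y i x * Y i x \<partial>M) \<le> (\<integral>x. C\<^sup>2 \<partial>M)"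
      using product_bound by (intro integral_mono integrable_product) (auto simp: abs_le_iff)
    then show "(\<integral>x. Y i x * Y i x \<partial>M) \<le> C\<^sup>2" by (simp add: prob_space)
  qed
  finally show ?thesis by simp
qed

theorem (in prob_space) strong_law_orthogonal_bounded:
  fixes Y :: "nat \<Rightarrow> 'a \<Rightarrow> real"
  assumes [measurable]: "\<And>i. Y i \<in> borel_measurable M"
    and bound: "\<And>i x. x \<in> space M \<Longrightarrow> \<bar>Y i x\<bar> \<le> C"
    and orthogonal: "\<And>i j. i \<noteq> j \<Longrightarrow> (\<integral>x. Y i x * Y j x \<partial>M) = 0"
  shows "AE x in M. (\<lambda>n. (\<Sum>i<n. Y i x) / real n) \<longlonglongrightarrow> 0"
proof -
  define Z where "Z k x = ((\<Sum>i<k\<^sup>2. Y i x) / real (k\<^sup>2))\<^sup>2" for k x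
  have [measurable]: "Z k \<in> borel_measurable M" for k
    unfolding Z_def by measurable
  have sum_bound: "\<bar>\<Sum>i<n. Y i x\<bar> \<le> real n * C" if "x \<in> space M" for n x
    using order_trans[OF sum_abs sum_bounded_above[of "{..<n}" "\<lambda>i. \<bar>Y i x\<bar>", OF bound[OF that]]]
    by simp
  have integrable_Z: "integrable M (Z k)" for k
  proof (intro integrable_const_bound[where B="C\<^sup>2"] AE_I2)
    fix x assume "x \<in> space M"
    then have "\<bar>(\<Sum>i<k\<^sup>2. Y i x) / real (k\<^sup>2)\<bar> \<le> C"
      using sum_bound[of x "k\<^sup>2"] order_trans[OF abs_ge_zero bound]
      by (cases "k = 0") (auto simp: field_simps)
    then have "\<bar>(\<Sum>i<k\<^sup>2. Y i x) / real (k\<^sup>2)\<bar>\<^sup>2 \<le> C\<^sup>2"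
      by (rule power_mono) simp
    then show "norm (Z k x) \<le> C\<^sup>2"
      by (simp only: Z_def real_norm_def abs_power2 power2_abs)
  qed measurable
  have integral_Z: "(\<integral>x. Z k x \<partial>M) \<le> C\<^sup>2 * inverse (real k ^ 2)" for k
  proof -
    have "(\<integral>x. Z k x \<partial>M) = (\<integral>x. (\<Sum>i<k\<^sup>2. Y i x)\<^sup>2 \<partial>M) / (real (k\<^sup>2))\<^sup>2"
      by (simp add: Z_def power_divide)
    also have "\<dots> \<le> real (k\<^sup>2) * C\<^sup>2 / (real (k\<^sup>2))\<^sup>2"
      by (intro divide_right_mono integral_square_sum_orthogonal_le bound orthogonal) auto
    also have "\<dots> = C\<^sup>2 * inverse (real k ^ 2)"
      by (simp add: power2_eq_square field_simps)
    finally show ?thesis .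
  qed
  have "summable (\<lambda>k. \<integral>x. Z k x \<partial>M)"
  proof (rule summable_comparison_test')
    show "summable (\<lambda>k. C\<^sup>2 * inverse (real k ^ 2))"
      by (intro summable_mult inverse_power_summable) simp
    show "norm (\<integral>x. Z k x \<partial>M) \<le> C\<^sup>2 * inverse (real k ^ 2)" for k
      using integral_Z[of k] by (simp add: Z_def)
  qed
  then have "AE x in M. (\<lambda>k. Z k x) \<longlonglongrightarrow> 0"
    by (intro AE_tendsto_zero_of_summable_integrals integrable_Z) (auto simp: Z_def)
  then show ?thesis
    using AE_space
  proof eventually_elim
    case (elim x)
    then have "(\<lambda>k. sqrt (Z k x)) \<longlonglongrightarrow> 0"
      using tendsto_real_sqrt by fastforce
    then have "(\<lambda>k. \<bar>(\<Sum>i<k\<^sup>2. Y i x) / real (k\<^sup>2)\<bar>) \<longlonglongrightarrow> 0"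
      by (simp only: Z_def real_sqrt_abs)
    then have "(\<lambda>k. (\<Sum>i<k\<^sup>2. Y i x) / real (k\<^sup>2)) \<longlonglongrightarrow> 0"
      by (rule tendsto_rabs_zero_cancel)
    then show ?case
      using bound elim(2) by (intro averages_tendsto_zero_of_squares) auto
  qed
qed

section \<open>Extending kernel identities from indicators to bounded functions\<close>

lemma (in prob_space) abs_integral_le:
  fixes f :: "'a \<Rightarrow> real"
  assumes [measurable]: "f \<in> borel_measurable M" and bound: "\<And>x. x \<in> space M \<Longrightarrow> \<bar>f x\<bar> \<le> B"
  shows "\<bar>\<integral>x. f x \<partial>M\<bar> \<le> B"
proof -
  have "\<bar>\<integral>x. f x \<partial>M\<bar> \<le> (\<integral>x. \<bar>f x\<bar> \<partial>M)"
    using integral_norm_bound[of M f] by simp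
  also have "\<dots> \<le> (\<integral>x. B \<partial>M)"
    using bound by (intro integral_mono integrable_const_bound[where B=B] AE_I2)
      (auto intro: order_trans[OF abs_ge_zero])
  finally show ?thesis by (simp add: prob_space)
qed

lemma kernel_prob_space:
  "\<kappa> \<in> M \<rightarrow>\<^sub>M prob_algebra N \<Longrightarrow> x \<in> space M \<Longrightarrow> prob_space (\<kappa> x) \<and> sets (\<kappa> x) = sets N"
  using measurable_space[of \<kappa> M "prob_algebra N" x] by (simp add: space_prob_algebra)

lemma measurable_kernel_sets:
  assumes "\<kappa> \<in> M \<rightarrow>\<^sub>M prob_algebra N" "x \<in> space M" "g \<in> N \<rightarrow>\<^sub>M L"
  shows "g \<in> \<kappa> x \<rightarrow>\<^sub>M L"
  using assms kernel_prob_space[OF assms(1,2)] by (subst measurable_cong_sets[of _ N L L]) auto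

lemma measurable_kernel_integral:
  assumes "\<kappa> \<in> M \<rightarrow>\<^sub>M prob_algebra N" and "g \<in> borel_measurable N"
  shows "(\<lambda>x. (\<integral>z. g z \<partial>\<kappa> x) :: real) \<in> borel_measurable M"
  using measurable_compose[OF measurable_prob_algebraD[OF assms(1)] integral_measurable_subprob_algebra[OF assms(2)]] .

lemma kernel_integral_bound:
  fixes g :: "'b \<Rightarrow> real"
  assumes "\<kappa> \<in> M \<rightarrow>\<^sub>M prob_algebra N" "x \<in> space M"
    and g: "g \<in> borel_measurable N" and bound: "\<And>z. \<bar>g z\<bar> \<le> B"
  shows "integrable (\<kappa> x) g" and "\<bar>\<integral>z. g z \<partial>\<kappa> x\<bar> \<le> B"
proof -
  interpret prob_space "\<kappa> x" using kernel_prob_space[OF assms(1,2)] by simp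
  have [measurable]: "g \<in> borel_measurable (\<kappa> x)"
    using measurable_kernel_sets[OF assms(1,2) g] .
  show "integrable (\<kappa> x) g"
    using bound by (intro integrable_const_bound[where B=B] AE_I2) auto
  show "\<bar>\<integral>z. g z \<partial>\<kappa> x\<bar> \<le> B"
    using bound by (intro abs_integral_le) simp_all
qed

(* For indicators, kernel_identity says that the bounded signed measures A \<mapsto> E[U 1_A(Y)] and
   A \<mapsto> E[V \<kappa>(A)] coincide. *)
locale kernel_pairing = prob_space M for M :: "'a measure" +
  fixes U V :: "'a \<Rightarrow> real" and Y :: "'a \<Rightarrow> 'c::topological_space"
    and \<kappa> :: "'a \<Rightarrow> 'c measure" and K :: real
  assumes kernel[measurable]: "\<kappa> \<in> M \<rightarrow>\<^sub>M prob_algebra borel"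
    and [measurable]: "U \<in> borel_measurable M" "V \<in> borel_measurable M" "Y \<in> M \<rightarrow>\<^sub>M borel"
    and U_bound: "\<And>x. x \<in> space M \<Longrightarrow> \<bar>U x\<bar> \<le> K"
    and V_bound: "\<And>x. x \<in> space M \<Longrightarrow> \<bar>V x\<bar> \<le> K"
begin

definition kernel_identity :: "('c \<Rightarrow> real) \<Rightarrow> bool" where
  "kernel_identity g \<longleftrightarrow> (\<integral>x. U x * g (Y x) \<partial>M) = (\<integral>x. V x * (\<integral>z. g z \<partial>\<kappa> x) \<partial>M)"

lemma kernel_integral_measurable[measurable]:
  "g \<in> borel_measurable borel \<Longrightarrow> (\<lambda>x. (\<integral>z. g z \<partial>\<kappa> x) :: real) \<in> borel_measurable M"
  by (rule measurable_kernel_integral[OF kernel])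

lemma integrable_U:
  "g \<in> borel_measurable borel \<Longrightarrow> (\<And>z. \<bar>g z\<bar> \<le> b) \<Longrightarrow> integrable M (\<lambda>x. U x * g (Y x))"
  using U_bound by (intro integrable_const_bound[where B="K * b"] AE_I2) (auto intro: abs_mult_le_mult)

lemma integrable_V:
  "g \<in> borel_measurable borel \<Longrightarrow> (\<And>z. \<bar>g z\<bar> \<le> b) \<Longrightarrow> integrable M (\<lambda>x. V x * (\<integral>z. g z \<partial>\<kappa> x))"
  using V_bound kernel_integral_bound(2)[OF kernel]
  by (intro integrable_const_bound[where B="K * b"] AE_I2) (auto intro: abs_mult_le_mult)

lemma kernel_identity_indicator:
  assumes "A \<in> sets borel"
    and "(\<integral>x. U x * indicator A (Y x) \<partial>M) = (\<integral>x. V x * measure (\<kappa> x) A \<partial>M)"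
  shows "kernel_identity (indicator A)"
proof -
  have "space (\<kappa> x) = UNIV" if "x \<in> space M" for x
    using kernel_prob_space[OF kernel that] sets_eq_imp_space_eq[of "\<kappa> x" borel] by simp
  then show ?thesis
    using assms(2) unfolding kernel_identity_def by (simp cong: Bochner_Integration.integral_cong)
qed

lemma kernel_identity_scale:
  "kernel_identity g \<Longrightarrow> kernel_identity (\<lambda>z. c * g z)"
  unfolding kernel_identity_def by (simp add: mult.left_commute[of _ c])

lemma kernel_identity_add:
  assumes g: "g \<in> borel_measurable borel" "\<And>z. \<bar>g z\<bar> \<le> b" "kernel_identity g"
    and g': "g' \<in> borel_measurable borel" "\<And>z. \<bar>g' z\<bar> \<le> b" "kernel_identity g'"
  shows "kernel_identity (\<lambda>z. g z + g' z)"
proof -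
  have "(\<integral>x. U x * (g (Y x) + g' (Y x)) \<partial>M) = (\<integral>x. U x * g (Y x) \<partial>M) + (\<integral>x. U x * g' (Y x) \<partial>M)"
    using integrable_U[OF g(1,2)] integrable_U[OF g'(1,2)] by (simp add: distrib_left)
  also have "\<dots> = (\<integral>x. V x * (\<integral>z. g z \<partial>\<kappa> x) \<partial>M) + (\<integral>x. V x * (\<integral>z. g' z \<partial>\<kappa> x) \<partial>M)"
    using g(3) g'(3) unfolding kernel_identity_def by simp
  also have "\<dots> = (\<integral>x. V x * (\<integral>z. g z \<partial>\<kappa> x) + V x * (\<integral>z. g' z \<partial>\<kappa> x) \<partial>M)"
    using integrable_V[OF g(1,2)] integrable_V[OF g'(1,2)]
    by (rule Bochner_Integration.integral_add[symmetric])
  also have "\<dots> = (\<integral>x. V x * (\<integral>z. g z + g' z \<partial>\<kappa> x) \<partial>M)"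
    using kernel_integral_bound(1)[OF kernel _ g(1,2)] kernel_integral_bound(1)[OF kernel _ g'(1,2)]
    by (intro Bochner_Integration.integral_cong refl) (simp add: distrib_left)
  finally show ?thesis
    unfolding kernel_identity_def .
qed

lemma kernel_identity_limit:
  assumes G: "\<And>i. G i \<in> borel_measurable borel" "\<And>i z. \<bar>G i z\<bar> \<le> b" "\<And>i. kernel_identity (G i)"
    and h: "h \<in> borel_measurable borel" and lim: "\<And>z. (\<lambda>i. G i z) \<longlonglongrightarrow> h z"
  shows "kernel_identity h"
proof -
  have "(\<lambda>i. \<integral>x. U x * G i (Y x) \<partial>M) \<longlonglongrightarrow> (\<integral>x. U x * h (Y x) \<partial>M)"
    using G(1,2) h lim U_bound
    by (intro integral_dominated_convergence[where w="\<lambda>_. K * b"] AE_I2 tendsto_mult tendsto_const)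
      (auto intro: abs_mult_le_mult)
  moreover have "(\<lambda>i. \<integral>x. V x * (\<integral>z. G i z \<partial>\<kappa> x) \<partial>M) \<longlonglongrightarrow> (\<integral>x. V x * (\<integral>z. h z \<partial>\<kappa> x) \<partial>M)"
  proof (rule integral_dominated_convergence[where w="\<lambda>_. K * b"])
    show "AE x in M. (\<lambda>i. V x * (\<integral>z. G i z \<partial>\<kappa> x)) \<longlonglongrightarrow> V x * (\<integral>z. h z \<partial>\<kappa> x)"
    proof (rule AE_I2)
      fix x assume x: "x \<in> space M"
      have "b \<ge> 0"
        using G(2)[of 0 undefined] by linarith
      then have "(\<lambda>i. \<integral>z. G i z \<partial>\<kappa> x) \<longlonglongrightarrow> (\<integral>z. h z \<partial>\<kappa> x)"
        using measurable_kernel_sets[OF kernel x] G(1,2) h lim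
          kernel_integral_bound(1)[OF kernel x, of "\<lambda>_. b" b]
        by (intro integral_dominated_convergence[where w="\<lambda>_. b"] AE_I2) auto
      then show "(\<lambda>i. V x * (\<integral>z. G i z \<partial>\<kappa> x)) \<longlonglongrightarrow> V x * (\<integral>z. h z \<partial>\<kappa> x)"
        by (intro tendsto_mult tendsto_const)
    qed
    show "AE x in M. norm (V x * (\<integral>z. G i z \<partial>\<kappa> x)) \<le> K * b" for i
      using V_bound kernel_integral_bound(2)[OF kernel _ G(1,2)]
      by (intro AE_I2) (auto intro: abs_mult_le_mult)
  qed (use G(1) h in auto)
  moreover have "(\<integral>x. U x * G i (Y x) \<partial>M) = (\<integral>x. V x * (\<integral>z. G i z \<partial>\<kappa> x) \<partial>M)" for i
    using G(3) unfolding kernel_identity_def by simp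
  ultimately show ?thesis
    unfolding kernel_identity_def using LIMSEQ_unique by simp
qed

lemma kernel_identity_nonneg:
  assumes indicators: "\<And>A. A \<in> sets borel \<Longrightarrow> kernel_identity (indicator A)"
    and g: "g \<in> borel_measurable borel" "\<And>z. 0 \<le> g z" and g_le: "\<And>z. g z \<le> b"
  shows "kernel_identity g"
proof -
  \<comment> \<open>The bound belongs to the induction predicate: the approximating simple functions inherit it.\<close>
  have "\<forall>b. (\<forall>z. g z \<le> b) \<longrightarrow> kernel_identity g"
    using g
  proof (induction g rule: borel_measurable_induct_real)
    case (set A)
    then show ?case using indicators by simp
  next
    case (mult g c)
    show ?case
    proof (intro allI impI)
      fix b assume bound: "\<forall>z. c * g z \<le> b"
      show "kernel_identity (\<lambda>z. c * g z)"
      proof (cases "c = 0")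
        case True
        then show ?thesis by (simp add: kernel_identity_def)
      next
        case False
        then have "\<forall>z. g z \<le> b / c"
          using bound mult.hyps(1) by (simp add: pos_le_divide_eq mult.commute)
        then show ?thesis
          using mult.IH by (intro kernel_identity_scale) blast
      qed
    qed
  next
    case (add g g')
    show ?case
    proof (intro allI impI)
      fix b assume sum_le: "\<forall>z. g' z + g z \<le> b"
      have bounds: "\<bar>g z\<bar> \<le> b" "\<bar>g' z\<bar> \<le> b" for z
        using sum_le[rule_format, of z] add.hyps(2,4)[of z] by auto
      have "kernel_identity g" "kernel_identity g'"
        using add.IH(1)[rule_format, OF abs_le_D1[OF bounds(1)]]
          add.IH(2)[rule_format, OF abs_le_D1[OF bounds(2)]] .
      with add.hyps(1,3) bounds show "kernel_identity (\<lambda>z. g' z + g z)"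
        by (intro kernel_identity_add)
    qed
  next
    case (seq G)
    show ?case
    proof (intro allI impI)
      fix b assume g_le': "\<forall>z. g z \<le> b"
      have G_le: "G i z \<le> g z" for i z
        using seq.hyps(3) seq.hyps(4)[of z] by (intro incseq_le) (auto simp: incseq_def le_fun_def)
      have G_bound: "\<bar>G i z\<bar> \<le> b" for i z
        using G_le[of i z] seq.hyps(2)[of i z] g_le'[rule_format, of z] by auto
      have "kernel_identity (G i)" for i
        using seq.IH[of i, rule_format, OF abs_le_D1[OF G_bound]] .
      from kernel_identity_limit[OF seq.hyps(1) G_bound this g(1) seq.hyps(4)]
      show "kernel_identity g" by simp
    qed
  qed
  with g_le show ?thesis by blast
qed

lemma kernel_identity_bounded:
  assumes indicators: "\<And>A. A \<in> sets borel \<Longrightarrow> kernel_identity (indicator A)"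
    and h: "h \<in> borel_measurable borel" "\<And>z. \<bar>h z\<bar> \<le> b"
  shows "kernel_identity h"
proof -
  have h_le: "h z \<le> b" "- h z \<le> b" "0 \<le> b" for z
    using h(2)[of z] by auto
  have pos: "kernel_identity (\<lambda>z. max (h z) 0)"
    using h(1) h_le(1,3) by (intro kernel_identity_nonneg[OF indicators]) auto
  have neg: "kernel_identity (\<lambda>z. -1 * max (- h z) 0)"
    using h(1) h_le(2,3) by (intro kernel_identity_scale kernel_identity_nonneg[OF indicators]) auto
  have "kernel_identity (\<lambda>z. max (h z) 0 + -1 * max (- h z) 0)"
    using h(1) h_le by (intro kernel_identity_add[OF _ _ pos _ _ neg, where b=b]) auto
  moreover have "(\<lambda>z. max (h z) 0 + -1 * max (- h z) 0) = h"
    by auto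
  ultimately show ?thesis by simp
qed

end

section \<open>Conditional independence in a product disintegration\<close>

locale product_disintegrated = prob_space M for M :: "'b measure" +
  fixes X :: "nat \<Rightarrow> 'b \<Rightarrow> 'a::topological_space" and \<xi> :: "nat \<Rightarrow> 'b \<Rightarrow> 'a measure"
  assumes X_measurable[measurable]: "\<And>i. X i \<in> M \<rightarrow>\<^sub>M borel"
    and disintegration: "product_disintegration M X \<xi>"
begin

abbreviation F :: "'b measure" where
  "F \<equiv> sigma_of_seq M \<xi>"

lemma \<xi>_measurable[measurable]: "\<xi> i \<in> M \<rightarrow>\<^sub>M prob_algebra borel"
  using disintegration unfolding product_disintegration_def by auto

lemma \<xi>_sequence_measurable: "(\<lambda>\<omega> i. \<xi> i \<omega>) \<in> M \<rightarrow>\<^sub>M PiM UNIV (\<lambda>_. prob_algebra borel)"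
  by (rule measurable_PiM_single') (auto intro: measurable_space[OF \<xi>_measurable])

lemma subalgebra_F: "subalgebra M F"
  unfolding subalgebra_def sigma_of_seq_def
  using sets_image_in_sets[OF refl \<xi>_sequence_measurable] by auto

lemma \<xi>_measurable_F: "\<xi> i \<in> F \<rightarrow>\<^sub>M prob_algebra borel"
proof -
  have "(\<lambda>\<omega> i. \<xi> i \<omega>) \<in> F \<rightarrow>\<^sub>M PiM UNIV (\<lambda>_. prob_algebra borel)"
    unfolding sigma_of_seq_def using measurable_space[OF \<xi>_sequence_measurable]
    by (intro measurable_vimage_algebra1) auto
  from measurable_compose[OF this measurable_component_singleton[of i UNIV]]
  show ?thesis by simp
qed

lemma space_\<xi>: "\<omega> \<in> space M \<Longrightarrow> space (\<xi> i \<omega>) = UNIV"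
  using kernel_prob_space[OF \<xi>_measurable] sets_eq_imp_space_eq[of "\<xi> i \<omega>" borel] by simp

lemma measure_\<xi>_UNIV: "\<omega> \<in> space M \<Longrightarrow> measure (\<xi> i \<omega>) UNIV = 1"
  using kernel_prob_space[OF \<xi>_measurable] space_\<xi> prob_space.prob_space by metis

lemma measure_\<xi>_le_1: "\<omega> \<in> space M \<Longrightarrow> \<bar>measure (\<xi> i \<omega>) A\<bar> \<le> 1"
  using kernel_prob_space[OF \<xi>_measurable] by (simp add: prob_space.prob_le_1)

lemma integral_\<xi>_measurable_F:
  "g \<in> borel_measurable borel \<Longrightarrow> (\<lambda>\<omega>. (\<integral>z. g z \<partial>\<xi> i \<omega>) :: real) \<in> borel_measurable F"
  by (rule measurable_kernel_integral[OF \<xi>_measurable_F])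

lemma integral_\<xi>_measurable[measurable]:
  "g \<in> borel_measurable borel \<Longrightarrow> (\<lambda>\<omega>. (\<integral>z. g z \<partial>\<xi> i \<omega>) :: real) \<in> borel_measurable M"
  by (rule measurable_kernel_integral[OF \<xi>_measurable])

lemma integral_mult_indicator_pair:
  assumes "a < b" and A[measurable]: "A \<in> sets borel" and B[measurable]: "B \<in> sets borel"
    and W[measurable]: "W \<in> borel_measurable F" and W_bound: "\<And>\<omega>. \<omega> \<in> space M \<Longrightarrow> \<bar>W \<omega>\<bar> \<le> K"
  shows "(\<integral>\<omega>. W \<omega> * (indicator A (X a \<omega>) * indicator B (X b \<omega>)) \<partial>M)
       = (\<integral>\<omega>. W \<omega> * (measure (\<xi> a \<omega>) A * measure (\<xi> b \<omega>) B) \<partial>M)"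
proof -
  interpret finite_measure_subalgebra M F
    using subalgebra_F by unfold_locales
  have [measurable]: "W \<in> borel_measurable M"
    using measurable_from_subalg[OF subalgebra_F W] .
  define C where "C i = (if i = a then A else if i = b then B else UNIV)" for i
  define S where "S = {\<omega>\<in>space M. \<forall>i\<le>b. X i \<omega> \<in> C i}"
  have cond_exp: "AE \<omega> in M. real_cond_exp M F (indicator S) \<omega> = (\<Prod>i\<le>b. measure (\<xi> i \<omega>) (C i))"
    using disintegration A B unfolding product_disintegration_def S_def C_def by auto
  have indicator_S: "indicator S \<omega> = indicator A (X a \<omega>) * (indicator B (X b \<omega>) :: real)"
    if "\<omega> \<in> space M" for \<omega>
    using that \<open>a < b\<close> unfolding S_def C_def by (auto simp: indicator_def)
  have [measurable]: "(indicator S :: 'b \<Rightarrow> real) \<in> borel_measurable M"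
    by (subst measurable_cong[OF indicator_S]) measurable
  have product_C: "(\<Prod>i\<le>b. measure (\<xi> i \<omega>) (C i)) = measure (\<xi> a \<omega>) A * measure (\<xi> b \<omega>) B"
    if "\<omega> \<in> space M" for \<omega>
  proof -
    have "(\<Prod>i\<le>b. measure (\<xi> i \<omega>) (C i)) = (\<Prod>i\<in>{a, b}. measure (\<xi> i \<omega>) (C i))"
      using \<open>a < b\<close> measure_\<xi>_UNIV[OF that] by (intro prod.mono_neutral_right) (auto simp: C_def)
    then show ?thesis
      using \<open>a < b\<close> by (simp add: C_def)
  qed
  have "integrable M (\<lambda>\<omega>. W \<omega> * indicator S \<omega>)"
  proof (rule integrable_const_bound[where B=K])
    show "AE \<omega> in M. norm (W \<omega> * indicator S \<omega>) \<le> K"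
      using W_bound by (intro AE_I2) (auto simp: indicator_def intro: order_trans[OF abs_ge_zero])
  qed measurable
  then have "(\<integral>\<omega>. W \<omega> * indicator S \<omega> \<partial>M) = (\<integral>\<omega>. W \<omega> * real_cond_exp M F (indicator S) \<omega> \<partial>M)"
    by (simp add: real_cond_exp_intg(2))
  also have "\<dots> = (\<integral>\<omega>. W \<omega> * (measure (\<xi> a \<omega>) A * measure (\<xi> b \<omega>) B) \<partial>M)"
  proof (rule integral_cong_AE)
    show "AE \<omega> in M. W \<omega> * real_cond_exp M F (indicator S) \<omega>
        = W \<omega> * (measure (\<xi> a \<omega>) A * measure (\<xi> b \<omega>) B)"
      using cond_exp AE_space by eventually_elim (simp add: product_C)
  qed measurable
  finally show ?thesis
    by (simp add: indicator_S cong: Bochner_Integration.integral_cong)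
qed

lemma integral_mult_pair:
  fixes g h :: "'a \<Rightarrow> real"
  assumes "a < b" and W[measurable]: "W \<in> borel_measurable F"
    and W_bound: "\<And>\<omega>. \<omega> \<in> space M \<Longrightarrow> \<bar>W \<omega>\<bar> \<le> K"
    and g[measurable]: "g \<in> borel_measurable borel" and g_bound: "\<And>z. \<bar>g z\<bar> \<le> c"
    and h[measurable]: "h \<in> borel_measurable borel" and h_bound: "\<And>z. \<bar>h z\<bar> \<le> d"
  shows "(\<integral>\<omega>. W \<omega> * (g (X a \<omega>) * h (X b \<omega>)) \<partial>M)
       = (\<integral>\<omega>. W \<omega> * ((\<integral>z. g z \<partial>\<xi> a \<omega>) * (\<integral>z. h z \<partial>\<xi> b \<omega>)) \<partial>M)"
proof -
  have [measurable]: "W \<in> borel_measurable M"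
    using measurable_from_subalg[OF subalgebra_F W] .
  have g_first: "(\<integral>\<omega>. W \<omega> * indicator B (X b \<omega>) * g (X a \<omega>) \<partial>M)
      = (\<integral>\<omega>. W \<omega> * measure (\<xi> b \<omega>) B * (\<integral>z. g z \<partial>\<xi> a \<omega>) \<partial>M)"
    if B[measurable]: "B \<in> sets borel" for B
  proof -
    interpret kernel_pairing M "\<lambda>\<omega>. W \<omega> * indicator B (X b \<omega>)" "\<lambda>\<omega>. W \<omega> * measure (\<xi> b \<omega>) B"
      "X a" "\<xi> a" K
    proof
      fix \<omega> assume \<omega>: "\<omega> \<in> space M"
      show "\<bar>W \<omega> * indicator B (X b \<omega>)\<bar> \<le> K"
        using abs_mult_le_mult[OF W_bound[OF \<omega>], of "indicator B (X b \<omega>)" 1] by simp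
      show "\<bar>W \<omega> * measure (\<xi> b \<omega>) B\<bar> \<le> K"
        using abs_mult_le_mult[OF W_bound[OF \<omega>] measure_\<xi>_le_1[OF \<omega>]] by simp
    qed measurable
    have "kernel_identity g"
      using integral_mult_indicator_pair[OF \<open>a < b\<close> _ B W W_bound]
      by (intro kernel_identity_bounded[OF kernel_identity_indicator g g_bound]) (auto simp: mult_ac)
    then show ?thesis
      unfolding kernel_identity_def .
  qed
  interpret kernel_pairing M "\<lambda>\<omega>. W \<omega> * g (X a \<omega>)" "\<lambda>\<omega>. W \<omega> * (\<integral>z. g z \<partial>\<xi> a \<omega>)"
    "X b" "\<xi> b" "K * c"
  proof
    fix \<omega> assume \<omega>: "\<omega> \<in> space M"
    show "\<bar>W \<omega> * g (X a \<omega>)\<bar> \<le> K * c"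
      using W_bound[OF \<omega>] g_bound by (rule abs_mult_le_mult)
    show "\<bar>W \<omega> * (\<integral>z. g z \<partial>\<xi> a \<omega>)\<bar> \<le> K * c"
      using W_bound[OF \<omega>] kernel_integral_bound(2)[OF \<xi>_measurable \<omega> g g_bound] by (rule abs_mult_le_mult)
  qed measurable
  have "kernel_identity h"
    using g_first
    by (intro kernel_identity_bounded[OF kernel_identity_indicator h h_bound]) (auto simp: mult_ac)
  then show ?thesis
    unfolding kernel_identity_def by (simp add: mult_ac)
qed

lemma integral_mult_single:
  fixes g :: "'a \<Rightarrow> real"
  assumes W[measurable]: "W \<in> borel_measurable F"
    and W_bound: "\<And>\<omega>. \<omega> \<in> space M \<Longrightarrow> \<bar>W \<omega>\<bar> \<le> K"
    and g[measurable]: "g \<in> borel_measurable borel" and g_bound: "\<And>z. \<bar>g z\<bar> \<le> c"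
  shows "(\<integral>\<omega>. W \<omega> * g (X a \<omega>) \<partial>M) = (\<integral>\<omega>. W \<omega> * (\<integral>z. g z \<partial>\<xi> a \<omega>) \<partial>M)"
  using integral_mult_pair[OF lessI W W_bound g g_bound, of "\<lambda>_. 1" 1]
  by (simp add: space_\<xi> measure_\<xi>_UNIV cong: Bochner_Integration.integral_cong)

lemma integral_centered_product:
  fixes f :: "'a \<Rightarrow> real"
  assumes "a \<noteq> b" and f[measurable]: "f \<in> borel_measurable borel" and f_bound: "\<And>z. \<bar>f z\<bar> \<le> c"
  shows "(\<integral>\<omega>. (f (X a \<omega>) - (\<integral>z. f z \<partial>\<xi> a \<omega>)) * (f (X b \<omega>) - (\<integral>z. f z \<partial>\<xi> b \<omega>)) \<partial>M) = 0"
proof -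
  define m where "m i \<omega> = (\<integral>z. f z \<partial>\<xi> i \<omega>)" for i \<omega>
  have m_F: "m i \<in> borel_measurable F" for i
    unfolding m_def by (rule integral_\<xi>_measurable_F[OF f])
  have [measurable]: "m i \<in> borel_measurable M" for i
    unfolding m_def by measurable
  have m_bound: "\<bar>m i \<omega>\<bar> \<le> c" if "\<omega> \<in> space M" for i \<omega>
    unfolding m_def by (rule kernel_integral_bound(2)[OF \<xi>_measurable that f f_bound])
  have integrable: "integrable M (\<lambda>\<omega>. p \<omega> * q \<omega>)"
    if [measurable]: "p \<in> borel_measurable M" "q \<in> borel_measurable M"
      and "\<And>\<omega>. \<omega> \<in> space M \<Longrightarrow> \<bar>p \<omega>\<bar> \<le> c" "\<And>\<omega>. \<omega> \<in> space M \<Longrightarrow> \<bar>q \<omega>\<bar> \<le> c" for p q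
    using that(3,4) by (intro integrable_const_bound[where B="c * c"] AE_I2) (auto intro: abs_mult_le_mult)
  have pair: "(\<integral>\<omega>. f (X i \<omega>) * f (X j \<omega>) \<partial>M) = (\<integral>\<omega>. m i \<omega> * m j \<omega> \<partial>M)" if "i < j" for i j
    using integral_mult_pair[OF that _ _ f f_bound f f_bound, of "\<lambda>_. 1" 1] by (simp add: m_def)
  have single: "(\<integral>\<omega>. m j \<omega> * f (X i \<omega>) \<partial>M) = (\<integral>\<omega>. m j \<omega> * m i \<omega> \<partial>M)" for i j
    using integral_mult_single[OF m_F m_bound f f_bound] by (simp add: m_def)
  have "(\<integral>\<omega>. (f (X a \<omega>) - m a \<omega>) * (f (X b \<omega>) - m b \<omega>) \<partial>M)
      = (\<integral>\<omega>. f (X a \<omega>) * f (X b \<omega>) \<partial>M) - (\<integral>\<omega>. m b \<omega> * f (X a \<omega>) \<partial>M)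
        - (\<integral>\<omega>. m a \<omega> * f (X b \<omega>) \<partial>M) + (\<integral>\<omega>. m a \<omega> * m b \<omega> \<partial>M)"
    using f_bound m_bound
    by (simp add: algebra_simps integrable)
  also have "\<dots> = 0"
    using \<open>a \<noteq> b\<close> pair[of a b] pair[of b a] single[of b a] single[of a b]
    by (cases "a < b") (auto simp: mult.commute)
  finally show ?thesis
    unfolding m_def .
qed

theorem strong_law_product_disintegration:
  fixes f :: "'a \<Rightarrow> real"
  assumes f[measurable]: "f \<in> borel_measurable borel" and f_bound: "\<And>z. \<bar>f z\<bar> \<le> c"
  shows "AE \<omega> in M. (\<lambda>n. (\<Sum>i<n. f (X i \<omega>) - (\<integral>z. f z \<partial>\<xi> i \<omega>)) / real n) \<longlonglongrightarrow> 0"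
proof (rule strong_law_orthogonal_bounded)
  show "\<bar>f (X i \<omega>) - (\<integral>z. f z \<partial>\<xi> i \<omega>)\<bar> \<le> 2 * c" if "\<omega> \<in> space M" for i \<omega>
    using f_bound[of "X i \<omega>"] kernel_integral_bound(2)[OF \<xi>_measurable[of i] that f f_bound]
    by linarith
qed (use integral_centered_product[OF _ f f_bound] in auto)

end

lemma
  fixes u v :: "nat \<Rightarrow> 'a::real_normed_vector"
  assumes "(\<lambda>n. u n - v n) \<longlonglongrightarrow> 0"
  shows convergent_iff_of_diff_tendsto_zero: "convergent u \<longleftrightarrow> convergent v"
    and lim_eq_of_diff_tendsto_zero: "convergent u \<Longrightarrow> lim u = lim v"
proof -
  have v_lim: "v \<longlonglongrightarrow> L" if "u \<longlonglongrightarrow> L" for L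
    using tendsto_diff[OF that assms] by simp
  have "u \<longlonglongrightarrow> L" if "v \<longlonglongrightarrow> L" for L
    using tendsto_add[OF that assms] by simp
  with v_lim show "convergent u \<longleftrightarrow> convergent v"
    unfolding convergent_def by blast
  show "lim u = lim v" if "convergent u"
    using that v_lim by (metis convergent_def limI)
qed

lemma
  fixes u v :: "nat \<Rightarrow> 'a \<Rightarrow> real"
  assumes "AE x in M. (\<lambda>n. u n x - v n x) \<longlonglongrightarrow> 0"
  shows AE_convergent_iff_of_diff_tendsto_zero:
      "(AE x in M. convergent (\<lambda>n. u n x)) \<longleftrightarrow> (AE x in M. convergent (\<lambda>n. v n x))"
    and AE_lim_eq_of_diff_tendsto_zero:
      "(AE x in M. convergent (\<lambda>n. u n x)) \<Longrightarrow> AE x in M. lim (\<lambda>n. u n x) = lim (\<lambda>n. v n x)"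
  using assms by (auto simp: convergent_iff_of_diff_tendsto_zero lim_eq_of_diff_tendsto_zero)

theorem theorem1:
  fixes M :: "'b measure"
    and X :: "nat \<Rightarrow> 'b \<Rightarrow> 'a::metric_space"
    and \<xi> :: "nat \<Rightarrow> 'b \<Rightarrow> 'a measure"
    and f :: "'a \<Rightarrow> real"
  assumes "compact (UNIV :: 'a set)"
    and "prob_space M"
    and "\<And>i. X i \<in> M \<rightarrow>\<^sub>M borel"
    and "product_disintegration M X \<xi>"
    and "continuous_on UNIV f"
  shows "(AE \<omega> in M. (\<lambda>n. (\<Sum>i<n. f (X i \<omega>) - integral\<^sup>L (\<xi> i \<omega>) f) / real n) \<longlonglongrightarrow> 0)
    \<and> ((AE \<omega> in M. convergent (\<lambda>n. (\<Sum>i<n. f (X i \<omega>)) / real n))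
         \<longleftrightarrow> (AE \<omega> in M. convergent (\<lambda>n. (\<Sum>i<n. integral\<^sup>L (\<xi> i \<omega>) f) / real n)))
    \<and> ((AE \<omega> in M. convergent (\<lambda>n. (\<Sum>i<n. f (X i \<omega>)) / real n)) \<longrightarrow>
         (AE \<omega> in M. lim (\<lambda>n. (\<Sum>i<n. f (X i \<omega>)) / real n)
                    = lim (\<lambda>n. (\<Sum>i<n. integral\<^sup>L (\<xi> i \<omega>) f) / real n)))"
proof -
  interpret product_disintegrated M X \<xi>
    using assms(2-4) by (rule product_disintegrated.intro[OF _ product_disintegrated_axioms.intro])
  have f: "f \<in> borel_measurable borel"
    using assms(5) by (rule borel_measurable_continuous_onI)
  obtain c where f_bound: "\<And>z. \<bar>f z\<bar> \<le> c"
    using compact_imp_bounded[OF compact_continuous_image[OF assms(5,1)]]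
    unfolding bounded_iff by auto
  have slln: "AE \<omega> in M. (\<lambda>n. (\<Sum>i<n. f (X i \<omega>) - integral\<^sup>L (\<xi> i \<omega>) f) / real n) \<longlonglongrightarrow> 0"
    using strong_law_product_disintegration[OF f f_bound] by simp
  have "(\<Sum>i<n. f (X i \<omega>)) / real n - (\<Sum>i<n. integral\<^sup>L (\<xi> i \<omega>) f) / real n
      = (\<Sum>i<n. f (X i \<omega>) - integral\<^sup>L (\<xi> i \<omega>) f) / real n" for n \<omega>
    by (simp add: sum_subtractf diff_divide_distrib)
  with slln have "AE \<omega> in M. (\<lambda>n. (\<Sum>i<n. f (X i \<omega>)) / real n - (\<Sum>i<n. integral\<^sup>L (\<xi> i \<omega>) f) / real n)
      \<longlonglongrightarrow> 0"
    by simp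
  with slln show ?thesis
    by (simp add: AE_convergent_iff_of_diff_tendsto_zero AE_lim_eq_of_diff_tendsto_zero)
qed

end
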